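(* Let $q\in(0,1)$ and let $W\in\mathbb{R}^{I\times I}$ be a nonnegative matrix with $W\mathbf{1}=\mathbf{1}$ and $\mathbf{1}^*W=\mathbf{1}^*$. Consider the Synchronous Asymmetric Gossip Algorithm: at each time $t$, every node $i\in I$ independently (of the other nodes and of the past) samples a node $j_i$ with probability $W_{i,j_i}$, and all nodes simultaneously update $x_i(t+1)=(1-q)x_i(t)+qx_{j_i}(t)$. Then for every $t\ge0$, $$\mathbb{E}[(\bar x(t)-\bar x(0))^2]\le\frac{q}{N(1-q)+q}V(x(0)).$$
   Context: $I$ is a finite set of $N$ nodes, $x(0)\in\mathbb{R}^I$ deterministic. $\mathbf{1}$ is the all-ones vector, $W^*$ the transpose. For $y\in\mathbb{R}^I$, $\bar y=\frac1N\sum_i y_i$ and $V(y)=\frac1N\sum_i(y_i-\bar y)^2$. *)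

theory Defs
  imports "HOL-Probability.Probability"
begin

text \<open>Nodes are the elements of a finite type 'i; N = CARD('i).\<close>

definition avg :: "('i::finite \<Rightarrow> real) \<Rightarrow> real" where
  "avg y = (\<Sum>i\<in>UNIV. y i) / real CARD('i)"

definition Var :: "('i::finite \<Rightarrow> real) \<Rightarrow> real" where
  "Var y = (\<Sum>i\<in>UNIV. (y i - avg y)^2) / real CARD('i)"

definition row_pmf :: "('i::finite \<Rightarrow> 'i \<Rightarrow> real) \<Rightarrow> 'i \<Rightarrow> 'i pmf" where
  "row_pmf W i = embed_pmf (W i)"

definition choice_pmf :: "('i::finite \<Rightarrow> 'i \<Rightarrow> real) \<Rightarrow> ('i \<Rightarrow> 'i) pmf" where
  "choice_pmf W = Pi_pmf UNIV undefined (row_pmf W)"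

definition sag_update :: "real \<Rightarrow> ('i \<Rightarrow> real) \<Rightarrow> ('i \<Rightarrow> 'i) \<Rightarrow> ('i \<Rightarrow> real)" where
  "sag_update q x J = (\<lambda>i. (1 - q) * x i + q * x (J i))"

primrec sag_dist :: "real \<Rightarrow> ('i::finite \<Rightarrow> 'i \<Rightarrow> real) \<Rightarrow> ('i \<Rightarrow> real) \<Rightarrow> nat \<Rightarrow> ('i \<Rightarrow> real) pmf" where
  "sag_dist q W x0 0 = return_pmf x0"
| "sag_dist q W x0 (Suc t) =
     bind_pmf (sag_dist q W x0 t) (\<lambda>x. map_pmf (sag_update q x) (choice_pmf W))"

end

theory Submission
  imports Defs
begin

(* For c = q / (N(1 - q) + q) the function
     Phi(x) = (avg x - avg x(0))^2 + c * Var x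
   is a supermartingale of the gossip process: writing u = W x for the vector of
   neighbour means, one step of the algorithm satisfies the exact drift identity
     E[Phi(x')] = Phi(x) - c q (1 - q) / N * sum_i (x_i - u_i)^2.
   Since Phi(x(0)) = c Var x(0) and (avg x - avg x(0))^2 <= Phi(x), the theorem follows. *)

lemma expectation_Pi_pmf_component:
  fixes g :: "'b \<Rightarrow> real"
  assumes "finite A" "i \<in> A"
  shows "measure_pmf.expectation (Pi_pmf A d p) (\<lambda>J. g (J i)) = measure_pmf.expectation (p i) g"
    and "integrable (Pi_pmf A d p) (\<lambda>J. g (J i)) \<longleftrightarrow> integrable (p i) g"
proof -
  have marginal: "map_pmf (\<lambda>J. J i) (Pi_pmf A d p) = p i"
    using assms by (simp add: Pi_pmf_component)
  show "measure_pmf.expectation (Pi_pmf A d p) (\<lambda>J. g (J i)) = measure_pmf.expectation (p i) g"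
    by (simp flip: marginal)
  show "integrable (Pi_pmf A d p) (\<lambda>J. g (J i)) \<longleftrightarrow> integrable (p i) g"
    by (simp flip: marginal)
qed

text \<open>Two distinct coordinates of a product pmf are independent, so the expectation of a
  product of functions of them factorises.\<close>
lemma expectation_Pi_pmf_pair:
  fixes g h :: "'b \<Rightarrow> real" and p :: "'a \<Rightarrow> 'b pmf"
  assumes A: "finite A" "i \<in> A" "k \<in> A" and "i \<noteq> k"
    and int: "integrable (p i) g" "integrable (p k) h"
  shows "measure_pmf.expectation (Pi_pmf A d p) (\<lambda>J. g (J i) * h (J k))
           = measure_pmf.expectation (p i) g * measure_pmf.expectation (p k) h"
    and "integrable (Pi_pmf A d p) (\<lambda>J. g (J i) * h (J k))"
proof -
  define f where "f = (\<lambda>l. if l = i then g else h)"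
  define X where "X = (\<lambda>l J. f l (J l))"
  have prod_X: "(\<Prod>l\<in>{i, k}. X l J) = g (J i) * h (J k)" for J
    using \<open>i \<noteq> k\<close> by (simp add: X_def f_def)
  have indep: "prob_space.indep_vars (Pi_pmf A d p) (\<lambda>_. borel) X {i, k}"
  proof -
    have "prob_space.indep_vars (Pi_pmf A d p) (\<lambda>_. count_space UNIV) (\<lambda>l J. J l) {i, k}"
      using A by (intro prob_space.indep_vars_subset[OF _ indep_vars_Pi_pmf])
        (auto intro: measure_pmf.prob_space_axioms)
    then show ?thesis
      unfolding X_def by (rule prob_space.indep_vars_compose2[OF measure_pmf.prob_space_axioms]) simp
  qed
  have int_X: "integrable (Pi_pmf A d p) (X l)" if "l \<in> {i, k}" for l
    using that A int \<open>i \<noteq> k\<close> by (auto simp: X_def f_def expectation_Pi_pmf_component(2))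
  show "measure_pmf.expectation (Pi_pmf A d p) (\<lambda>J. g (J i) * h (J k))
           = measure_pmf.expectation (p i) g * measure_pmf.expectation (p k) h"
    using prob_space.indep_vars_lebesgue_integral[OF measure_pmf.prob_space_axioms _ indep int_X]
      \<open>i \<noteq> k\<close> A
    by (simp add: prod_X X_def f_def expectation_Pi_pmf_component(1))
  show "integrable (Pi_pmf A d p) (\<lambda>J. g (J i) * h (J k))"
    using prob_space.indep_vars_integrable[OF measure_pmf.prob_space_axioms _ indep int_X]
    by (simp add: prod_X)
qed

lemma expectation_Pi_pmf_square_sum:
  fixes f :: "'a \<Rightarrow> 'b \<Rightarrow> real" and p :: "'a \<Rightarrow> 'b pmf"
  assumes "finite A"
    and int1: "\<And>i. i \<in> A \<Longrightarrow> integrable (p i) (f i)"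
    and int2: "\<And>i. i \<in> A \<Longrightarrow> integrable (p i) (\<lambda>v. (f i v)^2)"
  defines "m \<equiv> \<lambda>i. measure_pmf.expectation (p i) (f i)"
    and "s \<equiv> \<lambda>i. measure_pmf.expectation (p i) (\<lambda>v. (f i v)^2)"
  shows "measure_pmf.expectation (Pi_pmf A d p) (\<lambda>J. (\<Sum>i\<in>A. f i (J i))^2)
           = (\<Sum>i\<in>A. m i)^2 + (\<Sum>i\<in>A. s i - (m i)^2)"
proof -
  let ?E = "measure_pmf.expectation (Pi_pmf A d p)"
  have cross: "?E (\<lambda>J. f i (J i) * f k (J k)) = m i * m k + (if i = k then s i - (m i)^2 else 0)
       \<and> integrable (Pi_pmf A d p) (\<lambda>J. f i (J i) * f k (J k))"
    if "i \<in> A" "k \<in> A" for i k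
  proof (cases "i = k")
    case True
    then show ?thesis
      using expectation_Pi_pmf_component[OF \<open>finite A\<close> \<open>i \<in> A\<close>,
          where g="\<lambda>v. (f i v)^2" and d=d and p=p] int2 that
      by (simp add: power2_eq_square s_def)
  next
    case False
    then show ?thesis
      using expectation_Pi_pmf_pair[OF \<open>finite A\<close> that False,
          where p=p and g="f i" and h="f k" and d=d] int1 that
      by (simp add: m_def)
  qed
  have "?E (\<lambda>J. (\<Sum>i\<in>A. f i (J i))^2) = ?E (\<lambda>J. \<Sum>i\<in>A. \<Sum>k\<in>A. f i (J i) * f k (J k))"
    by (simp add: power2_eq_square sum_product)
  also have "\<dots> = (\<Sum>i\<in>A. \<Sum>k\<in>A. ?E (\<lambda>J. f i (J i) * f k (J k)))"
    using cross by (simp add: Bochner_Integration.integral_sum Bochner_Integration.integrable_sum)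
  also have "\<dots> = (\<Sum>i\<in>A. \<Sum>k\<in>A. m i * m k + (if i = k then s i - (m i)^2 else 0))"
    using cross by (intro sum.cong) auto
  also have "\<dots> = (\<Sum>i\<in>A. m i)^2 + (\<Sum>i\<in>A. s i - (m i)^2)"
    using \<open>finite A\<close> by (simp add: sum.distrib sum_product power2_eq_square)
  finally show ?thesis .
qed

text \<open>The vector \<open>W \<phi>\<close>: for a stochastic matrix, the mean of \<open>\<phi>\<close> over the neighbour
  sampled by node \<open>i\<close>.\<close>
definition neighbour_mean :: "('i::finite \<Rightarrow> 'i \<Rightarrow> real) \<Rightarrow> ('i \<Rightarrow> real) \<Rightarrow> 'i \<Rightarrow> real" where
  "neighbour_mean W \<phi> i = (\<Sum>j\<in>UNIV. W i j * \<phi> j)"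

locale stochastic_matrix =
  fixes W :: "'i::finite \<Rightarrow> 'i \<Rightarrow> real"
  assumes nonneg: "\<And>i j. 0 \<le> W i j"
    and row_sum: "\<And>i. (\<Sum>j\<in>UNIV. W i j) = 1"
begin

lemma pmf_row_pmf: "pmf (row_pmf W i) j = W i j"
  unfolding row_pmf_def
proof (rule pmf_embed_pmf)
  show "0 \<le> W i j" for j by (rule nonneg)
  have "(\<integral>\<^sup>+ j. ennreal (W i j) \<partial>count_space UNIV) = ennreal (\<Sum>j\<in>UNIV. W i j)"
    by (simp add: nn_integral_count_space_finite sum_ennreal nonneg)
  then show "(\<integral>\<^sup>+ j. ennreal (W i j) \<partial>count_space UNIV) = 1"
    by (simp add: row_sum)
qed

lemma expectation_row_pmf:
  "measure_pmf.expectation (row_pmf W i) \<phi> = neighbour_mean W \<phi> i"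
  by (subst integral_measure_pmf_real[where A=UNIV])
    (auto simp: pmf_row_pmf neighbour_mean_def mult.commute)

lemma expectation_choice_component:
  "measure_pmf.expectation (choice_pmf W) (\<lambda>J. \<phi> (J i)) = neighbour_mean W \<phi> i"
  unfolding choice_pmf_def
  by (simp add: expectation_Pi_pmf_component(1) expectation_row_pmf)

lemma expectation_choice_square_sum:
  "measure_pmf.expectation (choice_pmf W) (\<lambda>J. (\<Sum>i\<in>UNIV. \<phi> (J i))^2)
     = (\<Sum>i\<in>UNIV. neighbour_mean W \<phi> i)^2
       + (\<Sum>i\<in>UNIV. neighbour_mean W (\<lambda>j. (\<phi> j)^2) i - (neighbour_mean W \<phi> i)^2)"
  unfolding choice_pmf_def
  by (subst expectation_Pi_pmf_square_sum)
    (auto simp: expectation_row_pmf intro: integrable_measure_pmf_finite)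

end

text \<open>With unit column sums as well, summing a neighbour mean over all nodes recovers the
  plain sum; this makes the expected average invariant.\<close>
locale doubly_stochastic_matrix = stochastic_matrix W for W :: "'i::finite \<Rightarrow> 'i \<Rightarrow> real" +
  assumes col_sum: "\<And>j. (\<Sum>i\<in>UNIV. W i j) = 1"
begin

lemma sum_neighbour_mean: "(\<Sum>i\<in>UNIV. neighbour_mean W \<phi> i) = (\<Sum>j\<in>UNIV. \<phi> j)"
proof -
  have "(\<Sum>i\<in>UNIV. neighbour_mean W \<phi> i) = (\<Sum>j\<in>UNIV. (\<Sum>i\<in>UNIV. W i j) * \<phi> j)"
    unfolding neighbour_mean_def by (subst sum.swap) (simp add: sum_distrib_right)
  then show ?thesis by (simp add: col_sum)
qed

end

lemma sum_eq_card_avg: "(\<Sum>i\<in>UNIV. y i) = real CARD('i) * avg (y :: 'i::finite \<Rightarrow> real)"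
  unfolding avg_def by simp

lemma Var_eq_mean_square:
  fixes y :: "'i::finite \<Rightarrow> real"
  shows "Var y = (\<Sum>i\<in>UNIV. (y i)^2) / real CARD('i) - (avg y)^2"
proof -
  have "(\<Sum>i\<in>UNIV. (y i - avg y)^2)
      = (\<Sum>i\<in>UNIV. (y i)^2) - 2 * avg y * (\<Sum>i\<in>UNIV. y i) + real CARD('i) * (avg y)^2"
    by (simp add: power2_diff sum.distrib sum_subtractf sum_distrib_left sum_distrib_right
        algebra_simps)
  also have "\<dots> = (\<Sum>i\<in>UNIV. (y i)^2) - real CARD('i) * (avg y)^2"
    by (simp add: sum_eq_card_avg power2_eq_square)
  finally show ?thesis unfolding Var_def by (simp add: field_simps)
qed

lemma Var_nonneg: "0 \<le> Var (y :: 'i::finite \<Rightarrow> real)"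
  unfolding Var_def by (intro divide_nonneg_nonneg sum_nonneg) auto

lemma avg_sag_update:
  "avg (sag_update q x J) = (1 - q) * avg x + q * avg (\<lambda>i. x (J i))"
  unfolding avg_def sag_update_def
  by (simp add: sum.distrib sum_distrib_left add_divide_distrib)

definition sampling_variance :: "('i::finite \<Rightarrow> 'i \<Rightarrow> real) \<Rightarrow> ('i \<Rightarrow> real) \<Rightarrow> real" where
  "sampling_variance W x =
     (\<Sum>i\<in>UNIV. neighbour_mean W (\<lambda>j. (x j)^2) i - (neighbour_mean W x i)^2)"

context doubly_stochastic_matrix
begin

lemma expectation_avg_neighbours:
  "measure_pmf.expectation (choice_pmf W) (\<lambda>J. avg (\<lambda>i. x (J i))) = avg x"
  unfolding avg_def
  by (simp add: Bochner_Integration.integral_sum expectation_choice_component sum_neighbour_mean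
      integrable_measure_pmf_finite)

lemma expectation_avg_neighbours_sq:
  "measure_pmf.expectation (choice_pmf W) (\<lambda>J. (avg (\<lambda>i. x (J i)))^2)
     = (avg x)^2 + sampling_variance W x / (real CARD('i))^2"
  unfolding avg_def power_divide
  by (simp add: expectation_choice_square_sum sum_neighbour_mean sampling_variance_def
      add_divide_distrib)

lemma expectation_sq_avg_sag_update:
  "measure_pmf.expectation (choice_pmf W) (\<lambda>J. (avg (sag_update q x J) - a)^2)
     = (avg x - a)^2 + (q / real CARD('i))^2 * sampling_variance W x"
proof -
  define b where "b = (1 - q) * avg x - a"
  define Z where "Z = (\<lambda>J :: 'i \<Rightarrow> 'i. avg (\<lambda>i. x (J i)))"
  have "(avg (sag_update q x J) - a)^2 = b^2 + 2 * b * q * Z J + q^2 * (Z J)^2" for J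
    by (simp add: avg_sag_update b_def Z_def power2_eq_square algebra_simps)
  then have "measure_pmf.expectation (choice_pmf W) (\<lambda>J. (avg (sag_update q x J) - a)^2)
      = b^2 + 2 * b * q * measure_pmf.expectation (choice_pmf W) Z
        + q^2 * measure_pmf.expectation (choice_pmf W) (\<lambda>J. (Z J)^2)"
    by (simp add: integrable_measure_pmf_finite)
  also have "\<dots> = (avg x - a)^2 + (q / real CARD('i))^2 * sampling_variance W x"
    unfolding Z_def expectation_avg_neighbours expectation_avg_neighbours_sq b_def
    by (simp add: power2_eq_square algebra_simps)
  finally show ?thesis .
qed

lemma expectation_sum_sq_sag_update:
  "measure_pmf.expectation (choice_pmf W) (\<lambda>J. \<Sum>i\<in>UNIV. (sag_update q x J i)^2)
     = ((1 - q)^2 + q^2) * (\<Sum>i\<in>UNIV. (x i)^2)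
       + 2 * q * (1 - q) * (\<Sum>i\<in>UNIV. x i * neighbour_mean W x i)"
proof -
  have node: "measure_pmf.expectation (choice_pmf W) (\<lambda>J. (sag_update q x J i)^2)
      = (1 - q)^2 * (x i)^2 + 2 * q * (1 - q) * (x i * neighbour_mean W x i)
        + q^2 * neighbour_mean W (\<lambda>j. (x j)^2) i" for i
  proof -
    have "(sag_update q x J i)^2
        = (1 - q)^2 * (x i)^2 + 2 * q * (1 - q) * x i * x (J i) + q^2 * (x (J i))^2" for J
      by (simp add: sag_update_def power2_eq_square algebra_simps)
    then show ?thesis
      by (simp add: integrable_measure_pmf_finite expectation_choice_component
          expectation_choice_component[where \<phi>="\<lambda>j. (x j)^2"])
  qed
  have "measure_pmf.expectation (choice_pmf W) (\<lambda>J. \<Sum>i\<in>UNIV. (sag_update q x J i)^2)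
      = (1 - q)^2 * (\<Sum>i\<in>UNIV. (x i)^2)
        + 2 * q * (1 - q) * (\<Sum>i\<in>UNIV. x i * neighbour_mean W x i)
        + q^2 * (\<Sum>i\<in>UNIV. neighbour_mean W (\<lambda>j. (x j)^2) i)"
    by (simp add: Bochner_Integration.integral_sum integrable_measure_pmf_finite node sum.distrib
        sum_distrib_left)
  then show ?thesis
    by (simp add: sum_neighbour_mean algebra_simps)
qed

lemma expectation_Var_sag_update:
  "measure_pmf.expectation (choice_pmf W) (\<lambda>J. Var (sag_update q x J))
     = Var x - 2 * q * (1 - q) / real CARD('i)
                 * ((\<Sum>i\<in>UNIV. (x i)^2) - (\<Sum>i\<in>UNIV. x i * neighbour_mean W x i))
             - (q / real CARD('i))^2 * sampling_variance W x"
proof -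
  define n where "n = real CARD('i)"
  define S where "S = (\<Sum>i\<in>UNIV. (x i)^2)"
  define T where "T = (\<Sum>i\<in>UNIV. x i * neighbour_mean W x i)"
  have n: "n > 0" unfolding n_def by simp
  have "measure_pmf.expectation (choice_pmf W) (\<lambda>J. Var (sag_update q x J))
      = measure_pmf.expectation (choice_pmf W) (\<lambda>J. \<Sum>i\<in>UNIV. (sag_update q x J i)^2) / n
        - measure_pmf.expectation (choice_pmf W) (\<lambda>J. (avg (sag_update q x J) - 0)^2)"
    unfolding Var_eq_mean_square n_def by (simp add: integrable_measure_pmf_finite)
  also have "\<dots> = (((1 - q)^2 + q^2) * S + 2 * q * (1 - q) * T) / n
                   - ((avg x)^2 + (q / n)^2 * sampling_variance W x)"
    unfolding expectation_sum_sq_sag_update expectation_sq_avg_sag_update S_def T_def n_def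
    by simp
  also have "\<dots> = (S / n - (avg x)^2) - 2 * q * (1 - q) / n * (S - T)
                   - (q / n)^2 * sampling_variance W x"
    using n by (simp add: power2_eq_square field_simps)
  finally show ?thesis
    unfolding Var_eq_mean_square S_def T_def n_def .
qed

text \<open>Combining the sampling variance with the local disagreement gives a negative
  square sum; this again relies on the column sums of \<open>W\<close>.\<close>
lemma disagreement_identity:
  "sampling_variance W x - 2 * ((\<Sum>i\<in>UNIV. (x i)^2) - (\<Sum>i\<in>UNIV. x i * neighbour_mean W x i))
     = - (\<Sum>i\<in>UNIV. (x i - neighbour_mean W x i)^2)"
  unfolding sampling_variance_def
  by (simp add: sum_subtractf sum_neighbour_mean power2_diff sum.distrib sum_distrib_left
      algebra_simps)

text \<open>The drift identity: for \<open>c = q / (N (1 - q) + q)\<close> the growth of the squared deviation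
  of the average is exactly compensated by part of the decrease of the variance.\<close>
lemma lyapunov_drift:
  assumes c: "c * (real CARD('i) * (1 - q) + q) = q"
  shows "measure_pmf.expectation (choice_pmf W)
           (\<lambda>J. (avg (sag_update q x J) - a)^2 + c * Var (sag_update q x J))
         = (avg x - a)^2 + c * Var x
           - c * q * (1 - q) / real CARD('i) * (\<Sum>i\<in>UNIV. (x i - neighbour_mean W x i)^2)"
proof -
  define n where "n = real CARD('i)"
  define D where "D = sampling_variance W x"
  define G where "G = (\<Sum>i\<in>UNIV. (x i)^2) - (\<Sum>i\<in>UNIV. x i * neighbour_mean W x i)"
  have n: "n > 0" unfolding n_def by simp
  have balance: "(1 - c) * q = c * n * (1 - q)"
    using c unfolding n_def by (simp add: algebra_simps)
  have "measure_pmf.expectation (choice_pmf W)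
          (\<lambda>J. (avg (sag_update q x J) - a)^2 + c * Var (sag_update q x J))
      = measure_pmf.expectation (choice_pmf W) (\<lambda>J. (avg (sag_update q x J) - a)^2)
        + c * measure_pmf.expectation (choice_pmf W) (\<lambda>J. Var (sag_update q x J))"
    by (simp add: integrable_measure_pmf_finite)
  also have "\<dots> = (avg x - a)^2 + (q / n)^2 * D
                   + c * (Var x - 2 * q * (1 - q) / n * G - (q / n)^2 * D)"
    unfolding expectation_sq_avg_sag_update expectation_Var_sag_update n_def D_def G_def ..
  also have "\<dots> = (avg x - a)^2 + c * Var x
                   + (1 - c) * (q / n)^2 * D - c * (2 * q * (1 - q) / n) * G"
    by (simp add: algebra_simps)
  also have "\<dots> = (avg x - a)^2 + c * Var x + c * q * (1 - q) / n * (D - 2 * G)"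
  proof -
    have "(1 - c) * (q / n)^2 = ((1 - c) * q) * q / n^2"
      by (simp add: power_divide power2_eq_square)
    also have "\<dots> = c * q * (1 - q) / n"
      unfolding balance using n by (simp add: power2_eq_square field_simps)
    finally have coeff: "(1 - c) * (q / n)^2 = c * q * (1 - q) / n" .
    show ?thesis
      by (simp only: coeff) (use n in \<open>simp add: field_simps\<close>)
  qed
  also have "D - 2 * G = - (\<Sum>i\<in>UNIV. (x i - neighbour_mean W x i)^2)"
    unfolding D_def G_def by (rule disagreement_identity)
  finally show ?thesis unfolding n_def by simp
qed

corollary lyapunov_step_le:
  assumes "c * (real CARD('i) * (1 - q) + q) = q" and "0 \<le> c" and "0 \<le> q" and "q \<le> 1"
  shows "measure_pmf.expectation (choice_pmf W)
           (\<lambda>J. (avg (sag_update q x J) - a)^2 + c * Var (sag_update q x J))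
         \<le> (avg x - a)^2 + c * Var x"
proof -
  have "0 \<le> c * q * (1 - q) / real CARD('i) * (\<Sum>i\<in>UNIV. (x i - neighbour_mean W x i)^2)"
    using assms by (intro mult_nonneg_nonneg divide_nonneg_nonneg sum_nonneg) auto
  then show ?thesis
    unfolding lyapunov_drift[OF assms(1)] by linarith
qed

end

lemma sag_dist_supermartingale:
  fixes \<Phi> :: "('i::finite \<Rightarrow> real) \<Rightarrow> real"
  assumes nonneg: "\<And>x. 0 \<le> \<Phi> x"
    and drift: "\<And>x. measure_pmf.expectation (choice_pmf W) (\<lambda>J. \<Phi> (sag_update q x J)) \<le> \<Phi> x"
  shows "(\<integral>\<^sup>+x. ennreal (\<Phi> x) \<partial>sag_dist q W x0 t) \<le> ennreal (\<Phi> x0)"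
proof (induction t)
  case 0
  show ?case by simp
next
  case (Suc t)
  have step: "(\<integral>\<^sup>+y. ennreal (\<Phi> y) \<partial>map_pmf (sag_update q x) (choice_pmf W)) \<le> ennreal (\<Phi> x)"
    for x
  proof -
    have "(\<integral>\<^sup>+y. ennreal (\<Phi> y) \<partial>map_pmf (sag_update q x) (choice_pmf W))
        = ennreal (measure_pmf.expectation (choice_pmf W) (\<lambda>J. \<Phi> (sag_update q x J)))"
      by (simp add: nn_integral_eq_integral integrable_measure_pmf_finite nonneg)
    also have "\<dots> \<le> ennreal (\<Phi> x)"
      using drift by (rule ennreal_leI)
    finally show ?thesis .
  qed
  have "(\<integral>\<^sup>+x. ennreal (\<Phi> x) \<partial>sag_dist q W x0 (Suc t))
      = (\<integral>\<^sup>+x. (\<integral>\<^sup>+y. ennreal (\<Phi> y) \<partial>map_pmf (sag_update q x) (choice_pmf W))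
          \<partial>sag_dist q W x0 t)"
    by simp
  also have "\<dots> \<le> (\<integral>\<^sup>+x. ennreal (\<Phi> x) \<partial>sag_dist q W x0 t)"
    by (intro nn_integral_mono step)
  also have "\<dots> \<le> ennreal (\<Phi> x0)"
    by (rule Suc.IH)
  finally show ?case .
qed

theorem mainTheorem12:
  fixes q :: real and W :: "'i::finite \<Rightarrow> 'i \<Rightarrow> real" and x0 :: "'i \<Rightarrow> real" and t :: nat
  assumes "0 < q" and "q < 1"
    and "\<And>i j. W i j \<ge> 0"
    and "\<And>i. (\<Sum>j\<in>UNIV. W i j) = 1"
    and "\<And>j. (\<Sum>i\<in>UNIV. W i j) = 1"
  shows "measure_pmf.expectation (sag_dist q W x0 t) (\<lambda>x. (avg x - avg x0)^2)
           \<le> q / (real CARD('i) * (1 - q) + q) * Var x0"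
proof -
  interpret doubly_stochastic_matrix W
    by unfold_locales (use assms in auto)
  define c where "c = q / (real CARD('i) * (1 - q) + q)"
  have "real CARD('i) * (1 - q) + q > 0"
    using assms(1,2) by (intro add_nonneg_pos mult_nonneg_nonneg) auto
  then have c: "c * (real CARD('i) * (1 - q) + q) = q" and "0 \<le> c"
    using assms(1) by (simp_all add: c_def)
  define \<Phi> where "\<Phi> = (\<lambda>x :: 'i \<Rightarrow> real. (avg x - avg x0)^2 + c * Var x)"
  have \<Phi>_nonneg: "0 \<le> \<Phi> x" for x
    unfolding \<Phi>_def using \<open>0 \<le> c\<close> Var_nonneg[of x] by simp
  have "(\<integral>\<^sup>+x. ennreal ((avg x - avg x0)^2) \<partial>sag_dist q W x0 t)
      \<le> (\<integral>\<^sup>+x. ennreal (\<Phi> x) \<partial>sag_dist q W x0 t)"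
    unfolding \<Phi>_def using \<open>0 \<le> c\<close> by (intro nn_integral_mono ennreal_leI) (simp add: Var_nonneg)
  also have "\<dots> \<le> ennreal (\<Phi> x0)"
    using \<Phi>_nonneg lyapunov_step_le[OF c \<open>0 \<le> c\<close>] assms(1,2)
    by (intro sag_dist_supermartingale) (simp_all add: \<Phi>_def)
  finally have "measure_pmf.expectation (sag_dist q W x0 t) (\<lambda>x. (avg x - avg x0)^2) \<le> c * Var x0"
    using \<open>0 \<le> c\<close> by (intro integral_real_bounded) (simp_all add: \<Phi>_def Var_nonneg)
  then show ?thesis
    unfolding c_def .
qed

end
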